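(* Let $n$ be a positive integer, $q=2^n$, and $A,B,\delta\in\mathbb{F}_q$ with $A\neq0$ and $\frac{B^2}{A^2}+\frac{B}{A}+\delta\neq0$. Let $\mathcal{S}=\sum_{x\in\mathbb{F}_q}(-1)^{\mathrm{Tr}_1^n\left(\frac{Ax+B}{x^2+x+\delta}\right)}$ and let $C=(AB+A^2\delta)^{1/2}$ (the unique square root in $\mathbb{F}_q$). Then: (1) if $\mathrm{Tr}_1^n(\delta)=1$, $\mathcal{S}=(-1)^{\mathrm{Tr}_1^n(A)}+(-1)^{\mathrm{Tr}_1^n(\frac{B+C}{A})}-\mathcal{K}_n(B+C)(-1)^{\mathrm{Tr}_1^n(A)}$; (2) if $\mathrm{Tr}_1^n(\delta)=0$, $\mathcal{S}=-(-1)^{\mathrm{Tr}_1^n(A)}-(-1)^{\mathrm{Tr}_1^n(\frac{B+C}{A})}+\mathcal{K}_n(B+C)(-1)^{\mathrm{Tr}_1^n(A)}+2$.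
   Context: $\mathrm{Tr}_1^n$ is the absolute trace of $\mathbb{F}_{2^n}$. Division by zero uses the convention $\frac10=0$ (in particular the summand is $(-1)^0=1$ when $x^2+x+\delta=0$). The binary Kloosterman sum is $\mathcal{K}_n(a)=\sum_{x\in\mathbb{F}_{2^n}}(-1)^{\mathrm{Tr}_1^n(\frac1x+ax)}$. *)

theory Defs
  imports Main
begin

text \<open>Finite fields of characteristic 2 are modelled by a type of class field and finite
with 1 + 1 = 0 and CARD = 2^n.\<close>

definition abs_trace :: "nat \<Rightarrow> 'a::field \<Rightarrow> 'a" where
  "abs_trace n x = (\<Sum>i<n. x ^ (2 ^ i))"

definition chi :: "nat \<Rightarrow> 'a::field \<Rightarrow> int" where
  "chi n x = (if abs_trace n x = 0 then 1 else -1)"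

text \<open>Binary Kloosterman sum; division by zero is 0 in Isabelle, matching 1/0 = 0.\<close>
definition kloosterman :: "nat \<Rightarrow> 'a::{field,finite} \<Rightarrow> int" where
  "kloosterman n a = (\<Sum>x\<in>(UNIV::'a set). chi n (1 / x + a * x))"

end

theory Submission
  imports Defs "HOL-Computational_Algebra.Polynomial"
begin

text \<open>Write \<open>b = B/A\<close> and \<open>t = (B + C)/A\<close>, so that \<open>t\<^sup>2 = b\<^sup>2 + b + \<delta>\<close> and
  \<open>t \<noteq> 0\<close>. The shift \<open>x = y + b\<close> turns the sum into \<open>\<Sum>\<^sub>y \<chi>(A y / (y\<^sup>2 + y + t\<^sup>2))\<close>.
  Group the \<open>y\<close> by the value \<open>v\<close> of the summand: for \<open>v \<noteq> 0\<close> they are the roots of the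
  quadratic \<open>v y\<^sup>2 + (v + A) y + v t\<^sup>2\<close>, and since \<open>z\<^sup>2 + z + d\<close> has \<open>1 + \<chi>(d)\<close> roots
  (additive Hilbert 90) there are \<open>1 + \<chi>(v t / (v + A))\<close> of them, up to corrections at
  \<open>v = 0\<close> and \<open>v = A\<close>. Summing \<open>\<chi>(v)\<close> against these counts, the character sum
  \<open>\<Sum>\<^sub>v \<chi>(v)\<close> vanishes, and the substitution \<open>v = u + A\<close> turns the remaining term
  \<open>\<Sum>\<^sub>v \<chi>(v + v t / (v + A))\<close> into \<open>\<chi>(A + t) K(A t)\<close> with \<open>A t = B + C\<close>. Finally
  \<open>\<chi>(t) = \<chi>(t\<^sup>2) = \<chi>(\<delta>)\<close> decides the sign.\<close>

lemma char2_add_self: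
  fixes x :: "'a::ring_1"
  assumes char2: "(1::'a) + 1 = 0"
  shows "x + x = 0"
proof -
  have "x + x = (1 + 1) * x" by (simp only: distrib_right mult_1_left)
  with char2 show ?thesis by simp
qed

lemma char2_add_eq_0_iff:
  fixes x y :: "'a::ring_1"
  assumes char2: "(1::'a) + 1 = 0"
  shows "x + y = 0 \<longleftrightarrow> x = y"
  using minus_unique[OF char2_add_self[OF char2], of y] by (metis add_eq_0_iff2)

lemma char2_power2_add:
  fixes x y :: "'a::comm_ring_1"
  assumes char2: "(1::'a) + 1 = 0"
  shows "(x + y)^2 = x^2 + y^2"
proof -
  have "(x + y)^2 = x^2 + y^2 + (x*y + x*y)" by (simp add: power2_eq_square algebra_simps)
  with char2_add_self[OF char2] show ?thesis by simp
qed

lemma char2_power_two_power_add: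
  fixes x y :: "'a::comm_ring_1"
  assumes char2: "(1::'a) + 1 = 0"
  shows "(x + y)^(2^i) = x^(2^i) + y^(2^i)"
proof (induction i)
  case (Suc i)
  have "(x + y)^(2^Suc i) = ((x + y)^(2^i))^2" by (simp add: power_mult[symmetric] mult.commute)
  also have "\<dots> = (x^(2^i))^2 + (y^(2^i))^2" using Suc char2_power2_add[OF char2] by simp
  also have "\<dots> = x^(2^Suc i) + y^(2^Suc i)" by (simp add: power_mult[symmetric] mult.commute)
  finally show ?case .
qed simp

lemma char2_power2_sum:
  fixes f :: "'b \<Rightarrow> 'a::comm_ring_1"
  assumes char2: "(1::'a) + 1 = 0"
  shows "(\<Sum>i\<in>I. f i)^2 = (\<Sum>i\<in>I. (f i)^2)"
  by (induction I rule: infinite_finite_induct) (simp_all add: char2_power2_add[OF char2])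

lemma char2_artin_schreier_roots:
  fixes z0 d :: "'a::idom"
  assumes char2: "(1::'a) + 1 = 0"
    and root: "z0^2 + z0 + d = 0"
  shows "{z. z^2 + z + d = 0} = {z0, z0 + 1}"
proof -
  have "(z + z0) * (z + z0 + 1) = (z^2 + z + d) + (z0^2 + z0 + d) + ((z * z0 - d) + (z * z0 - d))"
    for z by (simp add: power2_eq_square algebra_simps)
  then have "(z + z0) * (z + z0 + 1) = z^2 + z + d" for z
    by (simp only: root char2_add_self[OF char2] add_0_right)
  then have "z^2 + z + d = 0 \<longleftrightarrow> z + z0 = 0 \<or> z + z0 + 1 = 0" for z
    by (metis mult_eq_0_iff)
  then show ?thesis
    by (auto simp: char2_add_eq_0_iff[OF char2] add.assoc)
qed

lemma sum_shift_quadratic_denominator: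
  fixes A b t d :: "'a::field"
  assumes char2: "(1::'a) + 1 = 0"
    and t: "t^2 = b^2 + b + d"
  shows "(\<Sum>x\<in>UNIV. f ((A * x + A * b) / (x^2 + x + d))) = (\<Sum>y\<in>UNIV. f (A * y / (y^2 + y + t^2)))"
proof (rule sum.reindex_bij_witness[where i = "\<lambda>x. x + b" and j = "\<lambda>x. x + b"])
  fix x :: 'a
  have "(x + b)^2 + (x + b) + t^2 = x^2 + x + d + (b^2 + b^2) + (b + b)"
    by (simp add: t char2_power2_add[OF char2] algebra_simps)
  then have "(x + b)^2 + (x + b) + t^2 = x^2 + x + d"
    by (simp only: char2_add_self[OF char2] add_0_right)
  then show "f (A * (x + b) / ((x + b)^2 + (x + b) + t^2)) = f ((A * x + A * b) / (x^2 + x + d))"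
    by (simp only: distrib_left)
qed (simp_all add: add.assoc char2_add_self[OF char2])

lemma Collect_linear_div_quadratic_eq_0:
  fixes A t :: "'a::field"
  assumes "A \<noteq> 0"
  shows "{y. A * y / (y^2 + y + t^2) = 0} = insert 0 {y. y^2 + y + t^2 = 0}"
  using assms by (auto simp only: divide_eq_0_iff mult_eq_0_iff)

lemma linear_div_quadratic_eq_iff:
  fixes A t v y :: "'a::field"
  assumes char2: "(1::'a) + 1 = 0"
    and A: "A \<noteq> 0" and t: "t \<noteq> 0" and v: "v \<noteq> 0"
  shows "A * y / (y^2 + y + t^2) = v \<longleftrightarrow> v * y^2 + (v + A) * y + v * t^2 = 0"
proof -
  have "v * y^2 + (v + A) * y + v * t^2 = A * y + v * (y^2 + y + t^2)"
    by (simp add: algebra_simps)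
  then have quadratic_iff: "v * y^2 + (v + A) * y + v * t^2 = 0 \<longleftrightarrow> A * y = v * (y^2 + y + t^2)"
    by (simp only: char2_add_eq_0_iff[OF char2])
  show ?thesis
  proof (cases "y^2 + y + t^2 = 0")
    case True
    then have "y \<noteq> 0" using t by (auto simp: power2_eq_square)
    with True A v show ?thesis unfolding quadratic_iff by simp
  next
    case False
    then show ?thesis unfolding quadratic_iff by (simp add: divide_eq_eq mult.commute)
  qed
qed

lemma abs_trace_add:
  fixes x y :: "'a::field"
  assumes char2: "(1::'a) + 1 = 0"
  shows "abs_trace n (x + y) = abs_trace n x + abs_trace n y"
  unfolding abs_trace_def by (simp add: char2_power_two_power_add[OF char2] sum.distrib)

lemma chi_zero [simp]: "chi n 0 = 1"
  by (simp add: chi_def abs_trace_def power_0_left)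

lemma chi_cases: "chi n x = 1 \<or> chi n x = -1"
  by (simp add: chi_def)

lemma kloosterman_eq_sum_add_divide:
  fixes a :: "'a::{field,finite}"
  shows "kloosterman n a = (\<Sum>u\<in>UNIV. chi n (u + a / u))"
  unfolding kloosterman_def
  by (rule sum.reindex_bij_witness[where i = inverse and j = inverse])
     (simp_all add: divide_inverse add.commute)

lemma sum_comp_eq_sum_card_fibres:
  fixes h :: "'a::finite \<Rightarrow> 'b::finite" and g :: "'b \<Rightarrow> 'c::semiring_1"
  shows "(\<Sum>y\<in>UNIV. g (h y)) = (\<Sum>v\<in>UNIV. of_nat (card {y. h y = v}) * g v)"
proof -
  have "(\<Sum>y\<in>UNIV. g (h y)) = (\<Sum>v\<in>UNIV. \<Sum>y\<in>{y. h y = v}. g (h y))"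
    using sum.group[of UNIV UNIV h "\<lambda>y. g (h y)"] by simp
  also have "\<dots> = (\<Sum>v\<in>UNIV. of_nat (card {y. h y = v}) * g v)"
    by (rule sum.cong) simp_all
  finally show ?thesis .
qed

lemma power_card_UNIV_eq_self:
  fixes x :: "'a::{field,finite}"
  shows "x ^ card (UNIV::'a set) = x"
proof (cases "x = 0")
  case False
  let ?S = "UNIV - {0::'a}"
  have "(\<Prod>y\<in>?S. x * y) = (\<Prod>y\<in>?S. y)"
    by (rule prod.reindex_bij_witness[where i = "\<lambda>y. y / x" and j = "\<lambda>y. x * y"])
       (use False in auto)
  then have "x ^ card ?S * (\<Prod>y\<in>?S. y) = 1 * (\<Prod>y\<in>?S. y)"
    by (simp only: prod.distrib prod_constant mult_1_left)
  then have "x ^ card ?S = 1"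
    by (rule mult_right_cancel[THEN iffD1, rotated]) simp
  moreover have "card (UNIV::'a set) = Suc (card ?S)"
    using card_Suc_Diff1[of "UNIV::'a set" 0] by simp
  ultimately show ?thesis
    by (simp only: power_Suc mult_1_right)
qed (simp add: finite_UNIV_card_ge_0)

context
  fixes n :: nat
  assumes card_UNIV: "card (UNIV::'a::{field,finite} set) = 2 ^ n"
begin

lemma abs_trace_power2:
  fixes x :: 'a
  shows "abs_trace n (x^2) = abs_trace n x"
proof -
  have "x + abs_trace n (x^2) = (\<Sum>i<Suc n. x^(2^i))"
    unfolding sum.lessThan_Suc_shift abs_trace_def by (simp add: power_mult[symmetric] mult.commute)
  also have "\<dots> = abs_trace n x + x"
    using power_card_UNIV_eq_self[of x] by (simp add: abs_trace_def card_UNIV add.commute)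
  finally show ?thesis by (simp add: add.commute)
qed

lemma chi_power2:
  fixes x :: 'a
  shows "chi n (x^2) = chi n x"
  by (simp add: chi_def abs_trace_power2)

lemma abs_trace_not_identically_zero: "\<exists>a::'a. abs_trace n a \<noteq> 0"
proof (rule ccontr)
  assume all_zero: "\<not> (\<exists>a::'a. abs_trace n a \<noteq> 0)"
  have "card {0::'a, 1} \<le> card (UNIV::'a set)" by (rule card_mono) simp_all
  then have "n > 0" using card_UNIV by (cases n) simp_all
  define p :: "'a poly" where "p = (\<Sum>i<n. monom 1 (2^i))"
  have "coeff p (2^(n-1)) = (\<Sum>i\<in>{n-1}. 1)"
    unfolding p_def coeff_sum coeff_monom
    by (rule sum.mono_neutral_cong_right) (use \<open>n > 0\<close> in auto)
  then have "p \<noteq> 0" by auto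
  have "degree p \<le> 2^(n-1)"
    unfolding p_def
    by (rule degree_sum_le) (auto simp: degree_monom_eq intro: power_increasing)
  moreover have "{x. poly p x = 0} = UNIV"
    using all_zero by (auto simp: p_def abs_trace_def poly_sum poly_monom)
  ultimately have "card (UNIV::'a set) \<le> 2^(n-1)"
    using card_poly_roots_bound[OF \<open>p \<noteq> 0\<close>] by simp
  moreover have "(2::nat)^(n-1) < 2^n" using \<open>n > 0\<close> by simp
  ultimately show False using card_UNIV by linarith
qed

end

context
  fixes n :: nat
  assumes char2: "(1::'a::{field,finite}) + 1 = 0"
    and card_UNIV: "card (UNIV::'a set) = 2 ^ n"
begin

lemma abs_trace_eq_0_or_1:
  fixes x :: 'a
  shows "abs_trace n x = 0 \<or> abs_trace n x = 1"
proof -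
  have "(abs_trace n x)^2 = abs_trace n (x^2)"
    unfolding abs_trace_def char2_power2_sum[OF char2] by (simp add: power_mult[symmetric] mult.commute)
  also have "\<dots> = abs_trace n x" by (rule abs_trace_power2[OF card_UNIV])
  finally have "abs_trace n x * (abs_trace n x - 1) = 0"
    by (simp add: power2_eq_square algebra_simps)
  then show ?thesis by simp
qed

lemma chi_add:
  fixes x y :: 'a
  shows "chi n (x + y) = chi n x * chi n y"
  using abs_trace_eq_0_or_1[of x] abs_trace_eq_0_or_1[of y]
  by (auto simp: chi_def abs_trace_add[OF char2] char2[unfolded one_add_one])

lemma chi_artin_schreier_shift:
  fixes b d :: 'a
  shows "chi n (b^2 + b + d) = chi n d"
  using chi_cases[of n b] by (auto simp: chi_add chi_power2[OF card_UNIV])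

lemma sum_chi_UNIV: "(\<Sum>v\<in>(UNIV::'a set). chi n v) = 0"
proof -
  obtain a :: 'a where "abs_trace n a \<noteq> 0"
    using abs_trace_not_identically_zero[OF card_UNIV] by blast
  then have "chi n a = -1" by (simp add: chi_def)
  have "(\<Sum>v\<in>(UNIV::'a set). chi n v) = (\<Sum>v\<in>UNIV. chi n (v + a))"
    by (rule sum.reindex_bij_witness[where i = "\<lambda>v. v + a" and j = "\<lambda>v. v + a"])
       (auto simp: add.assoc char2_add_self[OF char2])
  also have "\<dots> = - (\<Sum>v\<in>(UNIV::'a set). chi n v)"
    by (simp add: chi_add \<open>chi n a = -1\<close> sum_negf)
  finally show ?thesis by simp
qed

lemma card_abs_trace_eq_0: "2 * card {d::'a. abs_trace n d = 0} = card (UNIV::'a set)"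
proof -
  let ?K = "{d::'a. abs_trace n d = 0}"
  have "0 = (\<Sum>v\<in>(UNIV::'a set). chi n v)" by (simp add: sum_chi_UNIV)
  also have "\<dots> = int (card ?K) - int (card (- ?K))"
    by (simp add: chi_def sum.If_cases Collect_neg_eq)
  finally have "card ?K = card (- ?K)" by simp
  moreover have "card ?K + card (- ?K) = card (UNIV::'a set)"
    using card_Un_disjoint[of ?K "- ?K"] by (simp add: Compl_partition)
  ultimately show ?thesis by linarith
qed

lemma abs_trace_eq_0_if_root:
  fixes z d :: 'a
  assumes "z^2 + z + d = 0"
  shows "abs_trace n d = 0"
proof -
  have "z^2 + z = d" using assms by (simp only: char2_add_eq_0_iff[OF char2])
  then have "abs_trace n d = abs_trace n (z^2) + abs_trace n z"
    using abs_trace_add[OF char2] by metis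
  then show ?thesis
    by (simp add: abs_trace_power2[OF card_UNIV] char2_add_self[OF char2])
qed

text \<open>Additive Hilbert 90: the map \<open>z \<mapsto> z\<^sup>2 + z\<close> is two-to-one, so its image has
  half the size of the field and hence fills the trace-zero hyperplane.\<close>
lemma artin_schreier_solvable:
  fixes d :: 'a
  assumes "abs_trace n d = 0"
  shows "\<exists>z. z^2 + z + d = 0"
proof -
  define L where "L z = z^2 + z" for z :: 'a
  have root_iff: "L z = e \<longleftrightarrow> z^2 + z + e = 0" for z e
    unfolding L_def by (rule char2_add_eq_0_iff[OF char2, symmetric])
  have fibre: "card {z. L z = e} = 2" if "e \<in> range L" for e
  proof -
    from that obtain z0 where "L z0 = e" by blast
    then have "z0^2 + z0 + e = 0" by (simp only: root_iff)
    then have "{z. L z = e} = {z0, z0 + 1}"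
      unfolding root_iff by (rule char2_artin_schreier_roots[OF char2])
    then show ?thesis by simp
  qed
  have "card (UNIV::'a set) = (\<Sum>e\<in>range L. card {z. L z = e})"
    using sum.image_gen[of UNIV "\<lambda>_. 1::nat" L] by simp
  also have "\<dots> = (\<Sum>e\<in>range L. 2)"
    by (rule sum.cong) (simp_all only: fibre)
  also have "\<dots> = 2 * card (range L)"
    by simp
  finally have "card (range L) = card {d::'a. abs_trace n d = 0}"
    using card_abs_trace_eq_0 by linarith
  moreover have "range L \<subseteq> {d. abs_trace n d = 0}"
  proof (rule image_subsetI)
    fix z
    have "z^2 + z + L z = 0" by (simp only: root_iff[symmetric])
    then show "L z \<in> {d. abs_trace n d = 0}" by (simp add: abs_trace_eq_0_if_root)
  qed
  ultimately have "range L = {d. abs_trace n d = 0}"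
    by (intro card_subset_eq) simp_all
  with assms have "d \<in> range L" by simp
  then obtain z where "L z = d" by blast
  then show ?thesis by (auto simp only: root_iff)
qed

lemma card_artin_schreier_roots:
  fixes d :: 'a
  shows "int (card {z. z^2 + z + d = 0}) = 1 + chi n d"
proof (cases "abs_trace n d = 0")
  case True
  then obtain z0 where "z0^2 + z0 + d = 0" using artin_schreier_solvable by blast
  then show ?thesis
    using True by (simp add: char2_artin_schreier_roots[OF char2] chi_def)
next
  case False
  then have "{z. z^2 + z + d = 0} = {}" using abs_trace_eq_0_if_root by blast
  with False show ?thesis by (simp add: chi_def)
qed

lemma card_quadratic_roots:
  fixes a b c :: 'a
  assumes "a \<noteq> 0" and "b \<noteq> 0"
  shows "int (card {y. a * y^2 + b * y + c = 0}) = 1 + chi n (a * c / b^2)"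
proof -
  have root_iff: "a * y^2 + b * y + c = 0 \<longleftrightarrow> (a * y / b)^2 + a * y / b + a * c / b^2 = 0" for y
  proof -
    have "(a * y / b)^2 + a * y / b + a * c / b^2 = a / b^2 * (a * y^2 + b * y + c)"
      using assms by (simp add: field_simps power2_eq_square)
    with assms show ?thesis by simp
  qed
  have "{y. a * y^2 + b * y + c = 0} = (\<lambda>z. b * z / a) ` {z. z^2 + z + a * c / b^2 = 0}"
    using assms by (auto simp: root_iff intro!: image_eqI[where x = "a * _ / b"])
  moreover have "inj (\<lambda>z. b * z / a)"
    using assms by (auto intro: injI)
  ultimately show ?thesis
    by (simp add: card_image inj_on_subset card_artin_schreier_roots)
qed

text \<open>The junk value \<open>x / 0 = 0\<close> makes the formula uniform: for \<open>v = A\<close> the quadratic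
  degenerates to \<open>A (y + t)\<^sup>2 = 0\<close> with the single root \<open>t\<close>, and \<open>chi n (v t / 0) = 1\<close>.\<close>
lemma card_linear_div_quadratic_fibre:
  fixes A t v :: 'a
  assumes A: "A \<noteq> 0" and t: "t \<noteq> 0"
  shows "int (card {y. A * y / (y^2 + y + t^2) = v})
    = 1 + chi n (v * t / (v + A)) + (if v = 0 then chi n t else 0) - (if v = A then 1 else 0)"
proof -
  consider "v = 0" | "v = A" | "v \<noteq> 0" "v \<noteq> A" by blast
  then show ?thesis
  proof cases
    case 1
    have "0 \<notin> {y. y^2 + y + t^2 = 0}" using t by simp
    then have "int (card {y. A * y / (y^2 + y + t^2) = v}) = 1 + int (card {y. y^2 + y + t^2 = 0})"
      unfolding 1 Collect_linear_div_quadratic_eq_0[OF A] by simp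
    also have "\<dots> = 2 + chi n t"
      by (simp add: card_artin_schreier_roots chi_power2[OF card_UNIV])
    finally show ?thesis by (simp add: 1 A)
  next
    case 2
    have "A * y^2 + (A + A) * y + A * t^2 = 0 \<longleftrightarrow> y = t" for y
      using A by (simp add: char2_add_self[OF char2] flip: distrib_left char2_power2_add[OF char2])
        (simp add: char2_add_eq_0_iff[OF char2])
    then have "{y. A * y / (y^2 + y + t^2) = v} = {t}"
      using 2 A t by (auto simp: linear_div_quadratic_eq_iff[OF char2])
    then show ?thesis using 2 A by (simp add: char2_add_self[OF char2])
  next
    case 3
    then have "v + A \<noteq> 0" by (simp add: char2_add_eq_0_iff[OF char2])
    have "{y. A * y / (y^2 + y + t^2) = v} = {y. v * y^2 + (v + A) * y + v * t^2 = 0}"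
      using 3 A t by (simp add: linear_div_quadratic_eq_iff[OF char2])
    then have "int (card {y. A * y / (y^2 + y + t^2) = v}) = 1 + chi n (v * (v * t^2) / (v + A)^2)"
      using card_quadratic_roots[OF \<open>v \<noteq> 0\<close> \<open>v + A \<noteq> 0\<close>] by simp
    also have "v * (v * t^2) / (v + A)^2 = (v * t / (v + A))^2"
      by (simp add: power2_eq_square field_simps)
    finally show ?thesis using 3 by (simp add: chi_power2[OF card_UNIV])
  qed
qed

lemma sum_chi_eq_kloosterman:
  fixes A t :: 'a
  assumes "A \<noteq> 0"
  shows "(\<Sum>v\<in>UNIV. chi n (v + v * t / (v + A)))
    = chi n (A + t) * kloosterman n (A * t) + chi n A - chi n (A + t)"
proof -
  have "(\<Sum>v\<in>UNIV. chi n (v + v * t / (v + A))) = (\<Sum>u\<in>UNIV. chi n (u + A + (u + A) * t / u))"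
    by (rule sum.reindex_bij_witness[where i = "\<lambda>v. v + A" and j = "\<lambda>v. v + A"])
       (auto simp: add.assoc char2_add_self[OF char2])
  also have "\<dots> = (\<Sum>u\<in>UNIV. chi n (A + t) * chi n (u + A * t / u)
                      + (if u = 0 then chi n A - chi n (A + t) else 0))"
  proof (rule sum.cong)
    fix u :: 'a
    show "chi n (u + A + (u + A) * t / u)
        = chi n (A + t) * chi n (u + A * t / u) + (if u = 0 then chi n A - chi n (A + t) else 0)"
    proof (cases "u = 0")
      case False
      then have "u + A + (u + A) * t / u = (A + t) + (u + A * t / u)"
        by (simp add: field_simps)
      with False show ?thesis by (simp add: chi_add)
    qed simp
  qed simp
  also have "\<dots> = chi n (A + t) * kloosterman n (A * t) + chi n A - chi n (A + t)"
    by (simp add: sum.distrib kloosterman_eq_sum_add_divide sum_distrib_left)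
  finally show ?thesis .
qed

lemma sum_chi_linear_div_quadratic:
  fixes A t :: 'a
  assumes A: "A \<noteq> 0" and t: "t \<noteq> 0"
  shows "(\<Sum>y\<in>UNIV. chi n (A * y / (y^2 + y + t^2)))
    = chi n t * (chi n A * kloosterman n (A * t) - chi n A + 1)"
proof -
  let ?N = "\<lambda>v. int (card {y. A * y / (y^2 + y + t^2) = v})"
  have "(\<Sum>y\<in>UNIV. chi n (A * y / (y^2 + y + t^2))) = (\<Sum>v\<in>UNIV. ?N v * chi n v)"
    by (rule sum_comp_eq_sum_card_fibres)
  also have "\<dots> = (\<Sum>v\<in>UNIV. chi n v + chi n (v + v * t / (v + A))
                    + (if v = 0 then chi n t else 0) - (if v = A then chi n A else 0))"
  proof (rule sum.cong)
    fix v
    show "?N v * chi n v = chi n v + chi n (v + v * t / (v + A))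
        + (if v = 0 then chi n t else 0) - (if v = A then chi n A else 0)"
      unfolding card_linear_div_quadratic_fibre[OF A t] by (simp add: chi_add algebra_simps)
  qed simp
  also have "\<dots> = (\<Sum>v\<in>UNIV. chi n (v + v * t / (v + A))) + chi n t - chi n A"
    by (simp add: sum.distrib sum_subtractf sum_chi_UNIV)
  also have "\<dots> = chi n (A + t) * kloosterman n (A * t) - chi n (A + t) + chi n t"
    by (simp add: sum_chi_eq_kloosterman[OF A])
  finally show ?thesis by (simp add: chi_add algebra_simps)
qed

end

theorem lemma4:
  fixes A B \<delta> C :: "'a::{field,finite}" and n :: nat
  assumes "n > 0"
    and "(1::'a) + 1 = 0"
    and "card (UNIV::'a set) = 2 ^ n"
    and "A \<noteq> 0"
    and "B^2 / A^2 + B / A + \<delta> \<noteq> 0"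
    and "C^2 = A * B + A^2 * \<delta>"
  shows "(abs_trace n \<delta> = 1 \<longrightarrow>
           (\<Sum>x\<in>(UNIV::'a set). chi n ((A * x + B) / (x^2 + x + \<delta>)))
             = chi n A + chi n ((B + C) / A) - kloosterman n (B + C) * chi n A)
       \<and> (abs_trace n \<delta> = 0 \<longrightarrow>
           (\<Sum>x\<in>(UNIV::'a set). chi n ((A * x + B) / (x^2 + x + \<delta>)))
             = - chi n A - chi n ((B + C) / A) + kloosterman n (B + C) * chi n A + 2)"
proof -
  note char2 = assms(2) and card_UNIV = assms(3) and A = assms(4)
  define b where "b = B / A"
  define t where "t = (B + C) / A"
  have t2: "t^2 = b^2 + b + \<delta>"
  proof -
    have "t^2 = (B^2 + C^2) / A^2"
      by (simp add: t_def power_divide char2_power2_add[OF char2])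
    also have "\<dots> = (B^2 + A * B + A^2 * \<delta>) / A^2"
      by (simp only: assms(6) add.assoc)
    also have "\<dots> = b^2 + b + \<delta>"
      using A by (simp add: b_def field_simps power2_eq_square)
    finally show ?thesis .
  qed
  have "t \<noteq> 0"
    using t2 assms(5) by (auto simp: b_def power_divide)
  have "chi n t = chi n \<delta>"
    by (metis t2 chi_power2[OF card_UNIV] chi_artin_schreier_shift[OF char2 card_UNIV])
  have "(\<Sum>x\<in>UNIV. chi n ((A * x + B) / (x^2 + x + \<delta>)))
      = chi n t * (chi n A * kloosterman n (B + C) - chi n A + 1)"
    using sum_shift_quadratic_denominator[OF char2 t2, of "chi n" A]
      sum_chi_linear_div_quadratic[OF char2 card_UNIV A \<open>t \<noteq> 0\<close>]
    by (simp add: b_def t_def A)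
  then show ?thesis
    using \<open>chi n t = chi n \<delta>\<close> by (auto simp: chi_def t_def algebra_simps)
qed

end
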